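(* Let $\Sigma=(\mathbf{ex},\mathbf{fx},B)$ and $\Sigma'=(\mathbf{ex}',\mathbf{fx}',B')$ be seeds and $f:\mathcal A(\Sigma)\to\mathcal A(\Sigma')$ a rooted cluster morphism. Then: (1) the inclusion of the initial cluster of the image seed $f(\Sigma)$ into $\mathbf x'=\mathbf{ex}'\sqcup\mathbf{fx}'$ induces an injective rooted cluster morphism $\mathcal A(f(\Sigma))\to\mathcal A(\Sigma')$, so $\mathcal A(f(\Sigma))$ is a rooted cluster subalgebra of $\mathcal A(\Sigma')$; (2) if $f$ is ideal, then $f$ is the composition of a surjective rooted cluster morphism $\mathcal A(\Sigma)\to\mathcal A(f(\Sigma))$ and the injective rooted cluster morphism $\mathcal A(f(\Sigma))\to\mathcal A(\Sigma')$ of (1).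
   Context: A seed is a triple $\Sigma=(\mathbf{ex},\mathbf{fx},B)$ where $\mathbf{ex},\mathbf{fx}$ are disjoint finite or countable sets of indeterminates (exchangeable resp. frozen), $\mathbf x=\mathbf{ex}\sqcup\mathbf{fx}$, and $B=(b_{yz})_{y\in\mathbf x,z\in\mathbf{ex}}$ a locally finite integer matrix with skew-symmetrizable square part on $\mathbf{ex}\times\mathbf{ex}$. Mutation $\mu_x$ at $x\in\mathbf{ex}$: replace $x$ by $x'$ with $xx'=\prod_{b_{yx}>0}y^{b_{yx}}+\prod_{b_{yx}<0}y^{-b_{yx}}$, mutate $B$ by Fomin–Zelevinsky matrix mutation. $\mathcal A(\Sigma)$: $\Sigma$ with the $\mathbb Z$-subalgebra of $\mathbb Q(\mathbf x)$ generated by all cluster variables of seeds reachable by iterated mutations at exchangeable variables. A rooted cluster morphism $f:\mathcal A(\Sigma)\to\mathcal A(\Sigma')$ is a ring homomorphism with (CM1) $f(\mathbf{ex})\subseteq\mathbf{ex}'\sqcup\mathbb Z$, (CM2) $f(\mathbf{fx})\subseteq\mathbf x'\sqcup\mathbb Z$, (CM3) $f(\mu_{x_l}\circ\cdots\circ\mu_{x_1,\Sigma}(y))=\mu_{f(x_l)}\circ\cdots\circ\mu_{f(x_1),\Sigma'}(f(y))$ for all $y\in\mathbf x$ and all $\Sigma$-admissible mutation sequences whose image is $\Sigma'$-admissible (RHS read as $f(y)$ if $f(y)\in\mathbb Z$). Image seed: $f(\Sigma)=(\mathbf{ex}'\cap f(\mathbf{ex}),(\mathbf x'\cap f(\mathbf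 x))\setminus(\mathbf{ex}'\cap f(\mathbf{ex})),B'[\mathbf x'\cap f(\mathbf x)])$, where $B'[S]$ has rows indexed by $S$ and columns by $\mathbf{ex}'\cap f(\mathbf{ex})$. Always $\mathcal A(f(\Sigma))\subseteq f(\mathcal A(\Sigma))$; $f$ is ideal if equality holds. Rooted cluster subalgebra: source of an injective rooted cluster morphism. *)

theory Defs
  imports Complex_Main "HOL-Library.Poly_Mapping" "HOL-Library.Countable_Set"
begin

text \<open>Cluster variables are elements of an ambient field 'a of characteristic 0.
  The initial variables of a seed are required to be algebraically independent
  over Q, so that the subfield they generate is the field of rational functions Q(x).
  The exchange matrix B is a function on variables; only entries b_yz with
  y in ex union fx and z in ex are meaningful.\<close>

record 'a seed =
  exv :: "'a set"
  frv :: "'a set"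
  mat :: "'a \<Rightarrow> 'a \<Rightarrow> int"

definition allv :: "'a seed \<Rightarrow> 'a set" where
  "allv S = exv S \<union> frv S"

definition mono_eval :: "('a \<Rightarrow>\<^sub>0 nat) \<Rightarrow> 'a::field" where
  "mono_eval m = prod (\<lambda>v. v ^ Poly_Mapping.lookup m v) (Poly_Mapping.keys m)"

definition peval :: "(('a \<Rightarrow>\<^sub>0 nat) \<Rightarrow>\<^sub>0 int) \<Rightarrow> 'a::field" where
  "peval p = sum (\<lambda>m. of_int (Poly_Mapping.lookup p m) * mono_eval m) (Poly_Mapping.keys p)"

definition alg_indep :: "'a::field set \<Rightarrow> bool" where
  "alg_indep X \<longleftrightarrow>
     (\<forall>p::('a \<Rightarrow>\<^sub>0 nat) \<Rightarrow>\<^sub>0 int. (\<forall>m\<in>Poly_Mapping.keys p. Poly_Mapping.keys m \<subseteq> X) \<longrightarrow> peval p = 0 \<longrightarrow> p = 0)"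

definition locally_finite :: "'a seed \<Rightarrow> bool" where
  "locally_finite S \<longleftrightarrow>
     (\<forall>z\<in>exv S. finite {y\<in>allv S. mat S y z \<noteq> 0}) \<and>
     (\<forall>y\<in>allv S. finite {z\<in>exv S. mat S y z \<noteq> 0})"

definition skew_symmetrizable :: "'a seed \<Rightarrow> bool" where
  "skew_symmetrizable S \<longleftrightarrow>
     (\<exists>d::'a \<Rightarrow> int. (\<forall>x\<in>exv S. d x > 0) \<and>
        (\<forall>y\<in>exv S. \<forall>z\<in>exv S. d y * mat S y z = - (d z * mat S z y)))"

definition is_seed :: "'a::field_char_0 seed \<Rightarrow> bool" where
  "is_seed S \<longleftrightarrow> exv S \<inter> frv S = {} \<and> countable (exv S) \<and> countable (frv S) \<and>
     alg_indep (allv S) \<and> locally_finite S \<and> skew_symmetrizable S"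

definition new_var :: "'a::field seed \<Rightarrow> 'a \<Rightarrow> 'a" where
  "new_var S x =
     ((\<Prod>y\<in>{y\<in>allv S. mat S y x > 0}. y ^ nat (mat S y x)) +
      (\<Prod>y\<in>{y\<in>allv S. mat S y x < 0}. y ^ nat (- mat S y x))) / x"

text \<open>Fomin--Zelevinsky matrix mutation; the row/column of x is re-indexed by
  the new variable x'.\<close>
definition mut_mat :: "'a::field seed \<Rightarrow> 'a \<Rightarrow> 'a \<Rightarrow> 'a \<Rightarrow> int" where
  "mut_mat S x =
     (let x' = new_var S x; r = (\<lambda>v. if v = x' then x else v); B = mat S in
      (\<lambda>y z. let y0 = r y; z0 = r z in
         if y0 = x \<or> z0 = x then - B y0 z0
         else B y0 z0 + (\<bar>B y0 x\<bar> * B x z0 + B y0 x * \<bar>B x z0\<bar>) div 2))"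

definition mut :: "'a::field \<Rightarrow> 'a seed \<Rightarrow> 'a seed" where
  "mut x S = \<lparr> exv = insert (new_var S x) (exv S - {x}), frv = frv S, mat = mut_mat S x \<rparr>"

fun mutseq :: "'a::field list \<Rightarrow> 'a seed \<Rightarrow> 'a seed" where
  "mutseq [] S = S"
| "mutseq (x # xs) S = mutseq xs (mut x S)"

fun admissible :: "'a::field list \<Rightarrow> 'a seed \<Rightarrow> bool" where
  "admissible [] S = True"
| "admissible (x # xs) S = (x \<in> exv S \<and> admissible xs (mut x S))"

text \<open>track xs S y is the variable mu_{x_l} ... mu_{x_1,S}(y): the variable in the
  position of y after the mutation sequence.\<close>
fun track :: "'a::field list \<Rightarrow> 'a seed \<Rightarrow> 'a \<Rightarrow> 'a" where
  "track [] S y = y"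
| "track (x # xs) S y = track xs (mut x S) (if y = x then new_var S x else y)"

definition cluster_vars :: "'a::field seed \<Rightarrow> 'a set" where
  "cluster_vars S = (\<Union>xs\<in>{xs. admissible xs S}. allv (mutseq xs S))"

inductive_set clalg :: "'a::field seed \<Rightarrow> 'a set" for S where
  gen: "v \<in> cluster_vars S \<Longrightarrow> v \<in> clalg S"
| one: "1 \<in> clalg S"
| uminus: "a \<in> clalg S \<Longrightarrow> - a \<in> clalg S"
| add: "a \<in> clalg S \<Longrightarrow> b \<in> clalg S \<Longrightarrow> a + b \<in> clalg S"
| mult: "a \<in> clalg S \<Longrightarrow> b \<in> clalg S \<Longrightarrow> a * b \<in> clalg S"

definition ring_hom_on :: "'a::field set \<Rightarrow> 'b::field set \<Rightarrow> ('a \<Rightarrow> 'b) \<Rightarrow> bool" where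
  "ring_hom_on A A' f \<longleftrightarrow> f ` A \<subseteq> A' \<and> f 1 = 1 \<and>
     (\<forall>a\<in>A. \<forall>b\<in>A. f (a + b) = f a + f b \<and> f (a * b) = f a * f b)"

definition rooted_cluster_morphism ::
  "'a::field seed \<Rightarrow> 'b::field seed \<Rightarrow> ('a \<Rightarrow> 'b) \<Rightarrow> bool" where
  "rooted_cluster_morphism S S' f \<longleftrightarrow>
     ring_hom_on (clalg S) (clalg S') f \<and>
     (\<forall>x\<in>exv S. f x \<in> exv S' \<union> \<int>) \<and>
     (\<forall>x\<in>frv S. f x \<in> allv S' \<union> \<int>) \<and>
     (\<forall>xs y. admissible xs S \<longrightarrow> admissible (map f xs) S' \<longrightarrow> y \<in> allv S \<longrightarrow>
        f (track xs S y) = (if f y \<in> \<int> then f y else track (map f xs) S' (f y)))"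

definition image_seed :: "'a::field seed \<Rightarrow> 'b::field seed \<Rightarrow> ('a \<Rightarrow> 'b) \<Rightarrow> 'b seed" where
  "image_seed S S' f =
     (let E = exv S' \<inter> f ` exv S; X = allv S' \<inter> f ` allv S in
      \<lparr> exv = E, frv = X - E,
        mat = (\<lambda>y z. if y \<in> X \<and> z \<in> E then mat S' y z else 0) \<rparr>)"

definition ideal_morphism :: "'a::field seed \<Rightarrow> 'b::field seed \<Rightarrow> ('a \<Rightarrow> 'b) \<Rightarrow> bool" where
  "ideal_morphism S S' f \<longleftrightarrow> clalg (image_seed S S' f) = f ` clalg S"

end

theory Submission
  imports Defs
begin

text \<open>
  Let I = f(S) be the image seed: its exchangeable variables are E = ex' \<inter> f(ex), its
  cluster is X = x' \<inter> f(x), and its matrix is B' restricted to X \<times> E.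

  I is a full subseed of S': E \<subseteq> ex', X \<subseteq> x', and every nonzero entry of B' in
  a column indexed by E has its row in X.  The last point is the neighbour lemma: if f(x0) is
  exchangeable in S', applying f to the exchange relation of x0 gives a second expression of
  f(x0) \<mu>(f(x0)) as a sum of two monomials in X, and algebraic independence of x' forces both
  monomials of the exchange relation of f(x0) in S' to live in X.  For a full subseed, a
  mutation at an exchangeable variable produces the same new variable and the same relevant
  matrix entries as in the big seed, and fullness is preserved.  The only subtle point is that
  the new variable must be fresh, which holds because mutation preserves algebraic
  independence of the cluster.  Hence mutation sequences of I are admissible in S' with the
  same tracks, A(I) \<subseteq> A(S'), and the inclusion is an injective rooted cluster morphism.

  If f is ideal, f itself, corestricted to A(I) = f(A(S)), is a rooted cluster
  morphism, again because tracks in I coincide with tracks in S'; f is this surjection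
  followed by the inclusion.
\<close>

section \<open>Evaluation of integer polynomials\<close>

abbreviation lk :: "('a \<Rightarrow>\<^sub>0 'b::zero) \<Rightarrow> 'a \<Rightarrow> 'b" where "lk \<equiv> Poly_Mapping.lookup"
abbreviation ks :: "('a \<Rightarrow>\<^sub>0 'b::zero) \<Rightarrow> 'a set" where "ks \<equiv> Poly_Mapping.keys"

lemma mono_eval_superset:
  assumes "finite K" "ks m \<subseteq> K"
  shows "mono_eval m = (\<Prod>v\<in>K. v ^ lk m v)"
  unfolding mono_eval_def
  by (rule prod.mono_neutral_left) (use assms in \<open>auto simp: in_keys_iff\<close>)

lemma keys_add_nat: "ks (a + b) = ks a \<union> ks (b :: 'a \<Rightarrow>\<^sub>0 nat)"
  by (auto simp: in_keys_iff lookup_add)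

lemma mono_eval_add: "mono_eval (a + b) = (mono_eval a * mono_eval b :: 'a::field)"
proof -
  let ?K = "ks a \<union> ks b"
  have "mono_eval (a + b) = (\<Prod>v\<in>?K. v ^ lk (a+b) v)"
    by (rule mono_eval_superset) (auto simp: keys_add_nat)
  also have "\<dots> = (\<Prod>v\<in>?K. v ^ lk a v) * (\<Prod>v\<in>?K. v ^ lk b v)"
    by (simp add: lookup_add power_add prod.distrib)
  also have "\<dots> = mono_eval a * mono_eval b"
    by (simp add: mono_eval_superset[symmetric])
  finally show ?thesis .
qed

lemma mono_eval_zero [simp]: "mono_eval 0 = 1"
  by (simp add: mono_eval_def)

lemma mono_eval_single [simp]: "mono_eval (Poly_Mapping.single v k) = (v::'a::field) ^ k"
  by (simp add: mono_eval_def)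

lemma peval_superset:
  assumes "finite K" "ks p \<subseteq> K"
  shows "peval p = (\<Sum>m\<in>K. of_int (lk p m) * mono_eval m)"
  unfolding peval_def
  by (rule sum.mono_neutral_left) (use assms in \<open>auto simp: in_keys_iff\<close>)

lemma peval_add: "peval (p + q) = peval p + peval q"
proof -
  let ?K = "ks p \<union> ks q"
  have "peval (p + q) = (\<Sum>m\<in>?K. of_int (lk (p+q) m) * mono_eval m)"
    by (rule peval_superset) (simp_all add: keys_add)
  also have "\<dots> = (\<Sum>m\<in>?K. of_int (lk p m) * mono_eval m) + (\<Sum>m\<in>?K. of_int (lk q m) * mono_eval m)"
    by (simp add: lookup_add distrib_right sum.distrib)
  also have "\<dots> = peval p + peval q"
    by (simp add: peval_superset[symmetric])
  finally show ?thesis .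
qed

lemma peval_uminus: "peval (- p) = - peval p"
  unfolding peval_def by (simp add: sum_negf keys.rep_eq)

lemma peval_diff: "peval (p - q) = peval p - peval q"
  using peval_add[of p "-q"] by (simp add: peval_uminus)

lemma peval_zero [simp]: "peval 0 = 0"
  by (simp add: peval_def)

lemma peval_single [simp]: "peval (Poly_Mapping.single m c) = of_int c * mono_eval m"
  by (simp add: peval_def)

lemma peval_sum: "peval (sum g A) = (\<Sum>a\<in>A. peval (g a))"
  by (induction A rule: infinite_finite_induct) (auto simp: peval_add)

lemma lookup_sum_single:
  "lk (\<Sum>a\<in>A. Poly_Mapping.single (k a) (v a)) m = (\<Sum>a\<in>A. if k a = m then v a else 0)"
  by (simp add: lookup_sum lookup_single when_def)

lemma product_as_monomial:
  assumes "finite A" "\<forall>y\<in>A. e y > (0::nat)"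
  shows "\<exists>M. ks M = A \<and> mono_eval M = (\<Prod>y\<in>A. (y::'a::field) ^ e y)"
proof -
  define M where "M = (\<Sum>y\<in>A. Poly_Mapping.single y (e y))"
  have lk: "lk M z = (if z \<in> A then e z else 0)" for z
    unfolding M_def lookup_sum_single using assms(1) by (simp add: sum.delta)
  have k: "ks M = A" using assms(2) by (auto simp: in_keys_iff lk split: if_splits)
  have "mono_eval M = (\<Prod>v\<in>A. v ^ lk M v)" by (rule mono_eval_superset) (use assms k in auto)
  also have "\<dots> = (\<Prod>y\<in>A. y ^ e y)" by (rule prod.cong) (auto simp: lk)
  finally show ?thesis using k by blast
qed

lemma product_of_images_as_monomial:
  assumes "finite A" "\<forall>y\<in>A. g y \<in> V \<union> \<int>"
  shows "\<exists>c m. ks m \<subseteq> V \<inter> g ` A \<and> (\<Prod>y\<in>A. (g y::'a::field) ^ e y) = of_int c * mono_eval m"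
  using assms
proof (induction A rule: finite_induct)
  case empty
  then show ?case by (intro exI[of _ 1] exI[of _ 0]) auto
next
  case (insert a A)
  then obtain c m where cm: "ks m \<subseteq> V \<inter> g ` A" "(\<Prod>y\<in>A. g y ^ e y) = of_int c * mono_eval m"
    by auto
  have P: "(\<Prod>y\<in>insert a A. g y ^ e y) = g a ^ e a * (of_int c * mono_eval m)"
    using insert cm by simp
  show ?case
  proof (cases "g a \<in> \<int>")
    case True
    then obtain k where k: "g a = of_int k" by (auto elim: Ints_cases)
    show ?thesis using cm P
      by (intro exI[of _ "k ^ e a * c"] exI[of _ m]) (auto simp: k)
  next
    case False
    then have ga: "g a \<in> V" using insert by auto
    have "ks (m + Poly_Mapping.single (g a) (e a)) \<subseteq> V \<inter> g ` insert a A"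
      using cm ga by (auto simp: keys_add_nat)
    moreover have "(\<Prod>y\<in>insert a A. g y ^ e y) =
        of_int c * mono_eval (m + Poly_Mapping.single (g a) (e a))"
      using P by (simp add: mono_eval_add)
    ultimately show ?thesis by blast
  qed
qed

definition drop_var :: "'a \<Rightarrow> ('a \<Rightarrow>\<^sub>0 nat) \<Rightarrow> ('a \<Rightarrow>\<^sub>0 nat)" where
  "drop_var v m = Poly_Mapping.update v 0 m"

lemma drop_var_split: "m = drop_var v m + Poly_Mapping.single v (lk m v)"
  by (rule poly_mapping_eqI)
    (simp add: drop_var_def lookup_add lookup_update lookup_single when_def)

lemma keys_drop_var: "ks (drop_var v m) = ks m - {v}"
  by (simp add: drop_var_def keys_update)

lemma mono_eval_drop_var: "mono_eval m = (v::'a::field) ^ lk m v * mono_eval (drop_var v m)"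
  by (subst drop_var_split[of m v]) (simp add: mono_eval_add)

definition coeff_slice :: "'a \<Rightarrow> nat \<Rightarrow> (('a \<Rightarrow>\<^sub>0 nat) \<Rightarrow>\<^sub>0 int) \<Rightarrow> (('a \<Rightarrow>\<^sub>0 nat) \<Rightarrow>\<^sub>0 int)" where
  "coeff_slice v k p =
     (\<Sum>m\<in>{m\<in>ks p. lk m v = k}. Poly_Mapping.single (drop_var v m) (lk p m))"

lemma peval_coeff_slices:
  "peval p = (\<Sum>k\<in>(\<lambda>m. lk m v) ` ks p. (v::'a::field) ^ k * peval (coeff_slice v k p))"
proof -
  have "peval p = (\<Sum>m\<in>ks p. of_int (lk p m) * mono_eval m)" by (simp add: peval_def)
  also have "\<dots> = (\<Sum>m\<in>ks p. v ^ lk m v * (of_int (lk p m) * mono_eval (drop_var v m)))"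
  proof (rule sum.cong)
    fix m
    show "of_int (lk p m) * mono_eval m = v ^ lk m v * (of_int (lk p m) * mono_eval (drop_var v m))"
      by (subst mono_eval_drop_var[of m v]) (simp only: mult_ac)
  qed simp
  also have "\<dots> = (\<Sum>k\<in>(\<lambda>m. lk m v) ` ks p. \<Sum>m\<in>{m\<in>ks p. lk m v = k}.
                     v ^ lk m v * (of_int (lk p m) * mono_eval (drop_var v m)))"
    by (rule sum.group[symmetric]) auto
  also have "\<dots> = (\<Sum>k\<in>(\<lambda>m. lk m v) ` ks p. v ^ k * peval (coeff_slice v k p))"
    by (rule sum.cong) (auto simp: coeff_slice_def peval_sum sum_distrib_left)
  finally show ?thesis .
qed

lemma coeff_slice_nonzero:
  assumes "m \<in> ks p"
  shows "coeff_slice v (lk m v) p \<noteq> 0"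
proof -
  have "lk (coeff_slice v (lk m v) p) (drop_var v m) =
      (\<Sum>m'\<in>{m'\<in>ks p. lk m' v = lk m v}. if m' = m then lk p m else 0)"
    unfolding coeff_slice_def lookup_sum_single
  proof (rule sum.cong)
    fix m' assume "m' \<in> {m' \<in> ks p. lk m' v = lk m v}"
    then have "drop_var v m' = drop_var v m \<longleftrightarrow> m' = m"
      by (metis (mono_tags, lifting) drop_var_split mem_Collect_eq)
    then show "(if drop_var v m' = drop_var v m then lk p m' else 0) =
        (if m' = m then lk p m else 0)" by auto
  qed simp
  also have "\<dots> = lk p m" using assms by (simp add: sum.delta)
  finally show ?thesis using assms by (auto simp: in_keys_iff)
qed

definition mono_shift :: "('a \<Rightarrow>\<^sub>0 nat) \<Rightarrow> (('a \<Rightarrow>\<^sub>0 nat) \<Rightarrow>\<^sub>0 int) \<Rightarrow> (('a \<Rightarrow>\<^sub>0 nat) \<Rightarrow>\<^sub>0 int)" where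
  "mono_shift M u = (\<Sum>m\<in>ks u. Poly_Mapping.single (m + M) (lk u m))"

lemma peval_mono_shift: "peval (mono_shift M u) = (mono_eval M :: 'a::field) * peval u"
proof -
  have "peval (mono_shift M u) = (\<Sum>m\<in>ks u. peval (Poly_Mapping.single (m + M) (lk u m)))"
    unfolding mono_shift_def by (rule peval_sum)
  also have "\<dots> = (\<Sum>m\<in>ks u. mono_eval M * (of_int (lk u m) * mono_eval m))"
    by (simp add: mono_eval_add mult_ac)
  also have "\<dots> = mono_eval M * peval u"
    by (simp add: peval_def sum_distrib_left)
  finally show ?thesis .
qed

lemma add_right_cancel_monomial: "(m + M = m' + M) \<longleftrightarrow> m = (m' :: 'a \<Rightarrow>\<^sub>0 nat)"
proof
  assume h: "m + M = m' + M"
  show "m = m'"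
  proof (rule poly_mapping_eqI)
    fix z have "lk (m + M) z = lk (m' + M) z" using h by simp
    then show "lk m z = lk m' z" by (simp add: lookup_add)
  qed
qed simp

lemma lookup_mono_shift:
  "lk (mono_shift M u) m' = (\<Sum>m\<in>ks u. if m + M = m' then lk u m else 0)"
  unfolding mono_shift_def lookup_sum_single by simp

lemma lookup_mono_shift_eq: "lk (mono_shift M u) (m0 + M) = lk u m0"
proof -
  have "lk (mono_shift M u) (m0 + M) = (\<Sum>m\<in>ks u. if m = m0 then lk u m0 else 0)"
    unfolding lookup_mono_shift by (rule sum.cong) (auto simp: add_right_cancel_monomial)
  also have "\<dots> = lk u m0" by (simp add: sum.delta in_keys_iff)
  finally show ?thesis .
qed

section \<open>Algebraic independence\<close>

definition poly_over :: "'a set \<Rightarrow> (('a \<Rightarrow>\<^sub>0 nat) \<Rightarrow>\<^sub>0 int) \<Rightarrow> bool" where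
  "poly_over X p \<longleftrightarrow> (\<forall>m\<in>ks p. ks m \<subseteq> X)"

lemma alg_indepD: "alg_indep X \<Longrightarrow> poly_over X p \<Longrightarrow> peval p = 0 \<Longrightarrow> p = 0"
  unfolding alg_indep_def poly_over_def by blast

lemma alg_indep_mono: "alg_indep X \<Longrightarrow> Y \<subseteq> X \<Longrightarrow> alg_indep Y"
  unfolding alg_indep_def by blast

lemma poly_over_add: "poly_over X p \<Longrightarrow> poly_over X q \<Longrightarrow> poly_over X (p + q)"
  unfolding poly_over_def using keys_add[of p q] by blast

lemma poly_over_diff: "poly_over X p \<Longrightarrow> poly_over X q \<Longrightarrow> poly_over X (p - q)"
  unfolding poly_over_def using keys_add[of p "- q"] by (auto simp: keys.rep_eq)

lemma poly_over_single: "ks m \<subseteq> X \<Longrightarrow> poly_over X (Poly_Mapping.single m c)"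
  by (simp add: poly_over_def)

lemma poly_over_sum: "(\<And>a. a \<in> A \<Longrightarrow> poly_over X (g a)) \<Longrightarrow> poly_over X (sum g A)"
  by (induction A rule: infinite_finite_induct) (auto intro: poly_over_add simp: poly_over_def[of X 0])

lemma poly_over_coeff_slice: "poly_over (insert v Y) p \<Longrightarrow> poly_over Y (coeff_slice v k p)"
  unfolding coeff_slice_def
  by (intro poly_over_sum poly_over_single) (auto simp: poly_over_def keys_drop_var)

lemma poly_over_mono_shift: "ks M \<subseteq> X \<Longrightarrow> poly_over X u \<Longrightarrow> poly_over X (mono_shift M u)"
  unfolding mono_shift_def
  by (intro poly_over_sum poly_over_single) (auto simp: poly_over_def keys_add_nat)

lemma alg_indep_not_int:
  assumes "alg_indep X" "v \<in> X"
  shows "v \<notin> \<int>"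
proof
  assume "v \<in> \<int>"
  then obtain k where k: "v = of_int k" by (auto elim: Ints_cases)
  let ?p = "Poly_Mapping.single (Poly_Mapping.single v (1::nat)) (1::int) - Poly_Mapping.single 0 k"
  have "poly_over X ?p" using assms(2) by (intro poly_over_diff poly_over_single) auto
  moreover have "peval ?p = 0" by (simp add: peval_diff k)
  ultimately have "?p = 0" using assms(1) alg_indepD by blast
  then have "lk ?p (Poly_Mapping.single v 1) = 0" by simp
  moreover have "Poly_Mapping.single v (1::nat) \<noteq> 0"
    by (metis lookup_single_eq lookup_zero one_neq_zero)
  ultimately show False by (simp add: lookup_minus lookup_single when_def)
qed

lemma alg_indep_nonzero: "alg_indep X \<Longrightarrow> v \<in> X \<Longrightarrow> v \<noteq> 0"
  using alg_indep_not_int by fastforce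

lemma binomial_support:
  assumes "alg_indep V" "ks M1 \<subseteq> V" "ks M2 \<subseteq> V" "ks m1 \<subseteq> V" "ks m2 \<subseteq> V"
    and "ks M1 \<inter> ks M2 = {}"
    and eq: "mono_eval M1 + mono_eval M2 =
             of_int c1 * mono_eval m1 + of_int c2 * (mono_eval m2 :: 'a::field)"
    and "y \<in> ks M1 \<union> ks M2"
  shows "y \<in> ks m1 \<union> ks m2"
proof -
  let ?r = "Poly_Mapping.single M1 1 + Poly_Mapping.single M2 1
            - Poly_Mapping.single m1 c1 - Poly_Mapping.single m2 (c2::int)"
  have "poly_over V ?r" using assms by (intro poly_over_diff poly_over_add poly_over_single) auto
  moreover have "peval ?r = 0" using eq by (simp add: peval_diff peval_add)
  ultimately have r: "?r = 0" using assms(1) alg_indepD by blast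
  have ne: "M1 \<noteq> M2" using assms(6,8) by auto
  have "lk ?r M1 = 0" "lk ?r M2 = 0" using r by simp_all
  then have "(M1 = m1 \<or> M1 = m2) \<and> (M2 = m1 \<or> M2 = m2)" using ne
    by (auto simp: lookup_minus lookup_add lookup_single when_def split: if_splits)
  then show ?thesis using assms(8) by auto
qed

lemma binomial_nonzero:
  assumes "alg_indep Y" "ks M1 \<subseteq> Y" "ks M2 \<subseteq> Y"
  shows "mono_eval M1 + mono_eval M2 \<noteq> (0::'a::field)"
proof
  assume h: "mono_eval M1 + mono_eval M2 = (0::'a)"
  let ?r = "Poly_Mapping.single M1 (1::int) + Poly_Mapping.single M2 1"
  have "poly_over Y ?r" using assms by (intro poly_over_add poly_over_single) auto
  moreover have "peval ?r = (0::'a)" using h by (simp add: peval_add)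
  ultimately have "?r = 0" using assms(1) alg_indepD by blast
  then have "lk ?r M1 = 0" by simp
  then show False by (simp add: lookup_add lookup_single when_def split: if_splits)
qed

lemma binomial_power_times_poly:
  assumes "poly_over Y s" "ks M1 \<subseteq> Y" "ks M2 \<subseteq> Y"
  shows "\<exists>u. poly_over Y u \<and> peval u = ((mono_eval M1 + mono_eval M2 :: 'a::field) ^ k) * peval s"
proof (induction k)
  case 0
  then show ?case using assms(1) by auto
next
  case (Suc k)
  then obtain u where u: "poly_over Y u"
    "peval u = ((mono_eval M1 + mono_eval M2 :: 'a) ^ k) * peval s" by blast
  have "poly_over Y (mono_shift M1 u + mono_shift M2 u)"
    using u assms by (intro poly_over_add poly_over_mono_shift)
  moreover have "peval (mono_shift M1 u + mono_shift M2 u) =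
      ((mono_eval M1 + mono_eval M2 :: 'a) ^ Suc k) * peval s"
    by (simp add: peval_add peval_mono_shift u(2) algebra_simps)
  ultimately show ?case by blast
qed

lemma exchange_quotient_fresh:
  fixes x :: "'a::field"
  assumes ai: "alg_indep (insert x Y)" and xY: "x \<notin> Y" and M: "ks M1 \<subseteq> Y" "ks M2 \<subseteq> Y"
    and xn: "x * n = mono_eval M1 + mono_eval M2"
  shows "n \<notin> insert x Y"
proof
  assume w: "n \<in> insert x Y"
  define m0 where "m0 = Poly_Mapping.single x (1::nat) + Poly_Mapping.single n 1"
  let ?r = "Poly_Mapping.single m0 (1::int) - Poly_Mapping.single M1 1 - Poly_Mapping.single M2 1"
  have "poly_over (insert x Y) ?r" using M w
    by (intro poly_over_diff poly_over_single) (auto simp: m0_def keys_add_nat)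
  moreover have "peval ?r = (0::'a)" using xn by (simp add: peval_diff m0_def mono_eval_add)
  ultimately have "?r = 0" using ai alg_indepD by blast
  then have "lk ?r m0 = 0" by simp
  moreover have "lk m0 x \<noteq> 0" by (simp add: m0_def lookup_add)
  moreover have "lk M1 x = 0" "lk M2 x = 0" using M xY by (auto simp: in_keys_iff)
  ultimately show False
    by (auto simp: lookup_minus lookup_single when_def split: if_splits)
qed

lemma shifted_sum_zero:
  assumes fK: "finite K" and xY: "x \<notin> Y" and D: "\<And>k. k \<in> K \<Longrightarrow> k \<le> D"
    and u: "\<And>k. poly_over Y (u k)"
    and q0: "(\<Sum>k\<in>K. mono_shift (Poly_Mapping.single x (D - k)) (u k)) = 0"
    and kK: "k \<in> K"
  shows "u k = 0"
proof (rule poly_mapping_eqI)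
  fix m
  let ?xs = "\<lambda>k. Poly_Mapping.single x (D - k)"
  show "lk (u k) m = lk 0 m"
  proof (cases "m \<in> ks (u k)")
    case False then show ?thesis by (simp add: in_keys_iff)
  next
    case True
    have no_x: "lk m' x = 0" if "m' \<in> ks (u k')" for m' k'
      using u[of k'] that xY unfolding poly_over_def by (metis in_keys_iff subsetD)
    have other: "lk (mono_shift (?xs k') (u k')) (m + ?xs k) = 0" if "k' \<in> K" "k' \<noteq> k" for k'
      unfolding lookup_mono_shift
    proof (rule sum.neutral, intro ballI)
      fix m' assume m': "m' \<in> ks (u k')"
      have "m' + ?xs k' \<noteq> m + ?xs k"
      proof
        assume "m' + ?xs k' = m + ?xs k"
        then have "lk (m' + ?xs k') x = lk (m + ?xs k) x" by simp
        then have "D - k' = D - k" using no_x[OF m'] no_x[OF True] by (simp add: lookup_add)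
        then show False using D[OF that(1)] D[OF kK] that(2) by simp
      qed
      then show "(if m' + ?xs k' = m + ?xs k then lk (u k') m' else 0) = 0" by simp
    qed
    have "0 = (\<Sum>k'\<in>K. lk (mono_shift (?xs k') (u k')) (m + ?xs k))"
      using q0 by (simp add: lookup_sum[symmetric])
    also have "\<dots> = lk (mono_shift (?xs k) (u k)) (m + ?xs k)"
      by (rule sum.remove[OF fK kK, THEN trans]) (simp add: other)
    also have "\<dots> = lk (u k) m" by (rule lookup_mono_shift_eq)
    finally show ?thesis by simp
  qed
qed

text \<open>Clearing the denominator of n = c/x: if D bounds the n-degrees of p, then x^D p is
  a combination of the n-slices of p with coefficients x^(D-k) c^k, free of n.\<close>
lemma clear_exchanged_variable:
  fixes x :: "'a::field"
  assumes xc: "x * n = c" and D: "\<And>k. k \<in> (\<lambda>m. lk m n) ` ks p \<Longrightarrow> k \<le> D"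
  shows "(\<Sum>k\<in>(\<lambda>m. lk m n) ` ks p. x ^ (D - k) * (c ^ k * peval (coeff_slice n k p))) =
         x ^ D * peval p"
proof -
  have "(\<Sum>k\<in>(\<lambda>m. lk m n) ` ks p. x ^ (D - k) * (c ^ k * peval (coeff_slice n k p))) =
        (\<Sum>k\<in>(\<lambda>m. lk m n) ` ks p. x ^ D * (n ^ k * peval (coeff_slice n k p)))"
  proof (rule sum.cong)
    fix k assume "k \<in> (\<lambda>m. lk m n) ` ks p"
    then have "D = (D - k) + k" using D by simp
    then have "x ^ D * n ^ k = x ^ (D - k) * c ^ k"
      by (metis xc power_add power_mult_distrib mult.assoc)
    then show "x ^ (D - k) * (c ^ k * peval (coeff_slice n k p)) =
        x ^ D * (n ^ k * peval (coeff_slice n k p))"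
      by (simp add: mult.assoc[symmetric])
  qed simp
  also have "\<dots> = x ^ D * peval p"
    by (simp add: peval_coeff_slices[of p n] sum_distrib_left)
  finally show ?thesis .
qed

text \<open>A relation p(n, Y) = 0 is
  multiplied by x^D (D the n-degree of p) and rewritten as a relation between x and Y;
  independence then kills each n-slice of p in turn.\<close>
lemma exchange_alg_indep:
  fixes x :: "'a::field"
  assumes ai: "alg_indep (insert x Y)" and xY: "x \<notin> Y" and M: "ks M1 \<subseteq> Y" "ks M2 \<subseteq> Y"
    and xn: "x * n = mono_eval M1 + mono_eval M2"
  shows "alg_indep (insert n Y)"
  unfolding alg_indep_def
proof (intro allI impI)
  fix p :: "('a \<Rightarrow>\<^sub>0 nat) \<Rightarrow>\<^sub>0 int"
  assume "\<forall>m\<in>ks p. ks m \<subseteq> insert n Y" and pe: "peval p = 0"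
  then have pov: "poly_over (insert n Y) p" by (simp add: poly_over_def)
  define c where "c = mono_eval M1 + mono_eval M2"
  have aiY: "alg_indep Y" using ai alg_indep_mono by blast
  have cnz: "c \<noteq> 0" using binomial_nonzero[OF aiY M] by (simp add: c_def)
  have xc: "x * n = c" using xn by (simp add: c_def)
  define K where "K = (\<lambda>m. lk m n) ` ks p"
  define D where "D = Max K"
  have fK: "finite K" by (simp add: K_def)
  have kD: "k \<le> D" if "k \<in> K" for k using that fK by (simp add: D_def)
  note kD' = kD[unfolded K_def]
  define s where "s k = coeff_slice n k p" for k
  have s_over: "poly_over Y (s k)" for k unfolding s_def by (rule poly_over_coeff_slice[OF pov])
  define u where "u k = (SOME u. poly_over Y u \<and> peval u = c ^ k * peval (s k))" for k
  have u: "poly_over Y (u k) \<and> peval (u k) = c ^ k * peval (s k)" for k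
    unfolding u_def c_def by (rule someI_ex) (rule binomial_power_times_poly[OF s_over M])
  define q where "q = (\<Sum>k\<in>K. mono_shift (Poly_Mapping.single x (D - k)) (u k))"
  have "peval q = (\<Sum>k\<in>K. x ^ (D - k) * (c ^ k * peval (s k)))"
    unfolding q_def by (simp add: peval_sum peval_mono_shift u)
  also have "\<dots> = x ^ D * peval p"
    using clear_exchanged_variable[OF xc kD'] by (simp add: K_def s_def)
  finally have "peval q = 0" using pe by simp
  moreover have "poly_over (insert x Y) q"
  proof -
    have "poly_over (insert x Y) (u k)" for k using u[of k] by (auto simp: poly_over_def)
    then show ?thesis unfolding q_def by (intro poly_over_sum poly_over_mono_shift) auto
  qed
  ultimately have q0: "q = 0" using ai alg_indepD by blast
  have u0: "u k = 0" if "k \<in> K" for k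
  proof (rule shifted_sum_zero[OF fK xY kD])
    show "poly_over Y (u k)" for k using u by blast
    show "(\<Sum>k\<in>K. mono_shift (Poly_Mapping.single x (D - k)) (u k)) = 0" using q0 by (simp add: q_def)
  qed (use that in auto)
  have s0: "s k = 0" if "k \<in> K" for k
  proof -
    have "c ^ k * peval (s k) = 0" using u[of k] u0[OF that] by simp
    then have "peval (s k) = 0" using cnz by simp
    then show ?thesis using alg_indepD[OF aiY s_over] by blast
  qed
  show "p = 0"
  proof (rule ccontr)
    assume "p \<noteq> 0"
    then obtain m0 where m0: "m0 \<in> ks p" by (metis in_keys_iff lookup_zero poly_mapping_eqI)
    then have "lk m0 n \<in> K" by (simp add: K_def)
    then show False using s0 coeff_slice_nonzero[OF m0, of n] by (simp add: s_def)
  qed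
qed

section \<open>Mutation of well-formed seeds\<close>

text \<open>The part of the seed axioms that is stable under mutation and that the argument uses.\<close>
definition column_finite :: "'a seed \<Rightarrow> bool" where
  "column_finite T \<longleftrightarrow> (\<forall>z\<in>exv T. finite {y\<in>allv T. mat T y z \<noteq> 0})"

definition wf_seed :: "'a::field seed \<Rightarrow> bool" where
  "wf_seed T \<longleftrightarrow> exv T \<inter> frv T = {} \<and> alg_indep (allv T) \<and> column_finite T \<and> skew_symmetrizable T"

lemma is_seed_wf: "is_seed T \<Longrightarrow> wf_seed T"
  by (simp add: is_seed_def wf_seed_def column_finite_def locally_finite_def)

definition fz_entry :: "('a \<Rightarrow> 'a \<Rightarrow> int) \<Rightarrow> 'a \<Rightarrow> 'a \<Rightarrow> 'a \<Rightarrow> int" where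
  "fz_entry B x a b =
     (if a = x \<or> b = x then - B a b else B a b + (\<bar>B a x\<bar> * B x b + B a x * \<bar>B x b\<bar>) div 2)"

definition prev_var :: "'a::field seed \<Rightarrow> 'a \<Rightarrow> 'a \<Rightarrow> 'a" where
  "prev_var S x y = (if y = new_var S x then x else y)"

lemma mut_simps [simp]:
  "exv (mut x S) = insert (new_var S x) (exv S - {x})"
  "frv (mut x S) = frv S"
  "mat (mut x S) = mut_mat S x"
  by (simp_all add: mut_def)

lemma mut_mat_fz_entry: "mut_mat S x y z = fz_entry (mat S) x (prev_var S x y) (prev_var S x z)"
  by (simp add: mut_mat_def fz_entry_def prev_var_def Let_def)

lemma prev_var_exv: "x \<in> exv S \<Longrightarrow> y \<in> exv (mut x S) \<Longrightarrow> prev_var S x y \<in> exv S"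
  by (auto simp: prev_var_def)

lemma prev_var_allv: "x \<in> exv S \<Longrightarrow> y \<in> allv (mut x S) \<Longrightarrow> prev_var S x y \<in> allv S"
  by (auto simp: prev_var_def allv_def)

lemma fz_entry_cong:
  "B a b = B' a b \<Longrightarrow> B a x = B' a x \<Longrightarrow> B x b = B' x b \<Longrightarrow> fz_entry B x a b = fz_entry B' x a b"
  by (simp add: fz_entry_def)

lemma fz_entry_zero: "B a b = 0 \<Longrightarrow> B a x = 0 \<Longrightarrow> fz_entry B x a b = 0"
  by (simp add: fz_entry_def)

text \<open>Integer core of the fact that matrix mutation preserves skew-symmetrizability with the
  same symmetrizer: a case distinction on the signs of the two entries in the x-row/column.\<close>
lemma skew_arith:
  fixes a b a' b' B B' dy dz dx :: int
  assumes "dx > 0" "dy > 0" "dz > 0"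
    and "dy * a = - (dx * b')" "dx * b = - (dz * a')" "dy * B = - (dz * B')"
  shows "dy * (B + (\<bar>a\<bar>*b + a*\<bar>b\<bar>) div 2) = - (dz * (B' + (\<bar>a'\<bar>*b' + a'*\<bar>b'\<bar>) div 2))"
proof -
  have prod: "dy * a * b = dz * a' * b'"
  proof -
    have "dy * a * b = - (dx * b') * b" using assms(4) by simp
    also have "\<dots> = - (dx * b) * b'" by (simp add: algebra_simps)
    also have "\<dots> = dz * a' * b'" using assms(5) by simp
    finally show ?thesis .
  qed
  have sa: "(a \<ge> 0) = (b' \<le> 0)" "a = 0 \<longleftrightarrow> b' = 0"
  proof -
    have "0 \<le> dy * a \<longleftrightarrow> 0 \<le> a" "0 \<le> - (dx * b') \<longleftrightarrow> b' \<le> 0"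
      using assms(1,2) by (simp_all add: zero_le_mult_iff mult_le_0_iff)
    then show "(a \<ge> 0) = (b' \<le> 0)" using assms(4) by simp
    show "a = 0 \<longleftrightarrow> b' = 0" using assms(1,2,4) by auto
  qed
  have sb: "(b \<ge> 0) = (a' \<le> 0)" "b = 0 \<longleftrightarrow> a' = 0"
  proof -
    have "0 \<le> dx * b \<longleftrightarrow> 0 \<le> b" "0 \<le> - (dz * a') \<longleftrightarrow> a' \<le> 0"
      using assms(1,3) by (simp_all add: zero_le_mult_iff mult_le_0_iff)
    then show "(b \<ge> 0) = (a' \<le> 0)" using assms(5) by simp
    show "b = 0 \<longleftrightarrow> a' = 0" using assms(1,3,5) by auto
  qed
  consider "a \<ge> 0" "b \<ge> 0" | "a \<ge> 0" "b < 0" | "a < 0" "b \<ge> 0" | "a < 0" "b < 0" by linarith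
  then show ?thesis
  proof cases
    case 1
    then have "(\<bar>a'\<bar>*b' + a'*\<bar>b'\<bar>) div 2 = - (a' * b')" "(\<bar>a\<bar>*b + a*\<bar>b\<bar>) div 2 = a * b"
      using sa sb by (simp_all add: abs_of_nonpos abs_of_nonneg)
    then show ?thesis using prod assms(6) by (simp add: algebra_simps)
  next
    case 2
    then have "(\<bar>a'\<bar>*b' + a'*\<bar>b'\<bar>) div 2 = 0" "(\<bar>a\<bar>*b + a*\<bar>b\<bar>) div 2 = 0"
      using sa sb by (simp_all add: abs_if)
    then show ?thesis using assms(6) by simp
  next
    case 3
    then have "(\<bar>a'\<bar>*b' + a'*\<bar>b'\<bar>) div 2 = 0" "(\<bar>a\<bar>*b + a*\<bar>b\<bar>) div 2 = 0"
      using sa sb by (simp_all add: abs_if)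
    then show ?thesis using assms(6) by simp
  next
    case 4
    then have "(\<bar>a'\<bar>*b' + a'*\<bar>b'\<bar>) div 2 = a' * b'" "(\<bar>a\<bar>*b + a*\<bar>b\<bar>) div 2 = - (a * b)"
      using sa sb by (simp_all add: abs_if)
    then show ?thesis using prod assms(6) by (simp add: algebra_simps)
  qed
qed

lemma fz_entry_skew:
  assumes d: "\<forall>v\<in>E. d v > (0::int)" "\<forall>a\<in>E. \<forall>b\<in>E. d a * B a b = - (d b * B b a)"
    and x: "x \<in> E" and a: "a \<in> E" and b: "b \<in> E"
  shows "d a * fz_entry B x a b = - (d b * fz_entry B x b a)"
proof -
  have ab: "d a * B a b = - (d b * B b a)" using d(2) a b by blast
  show ?thesis
  proof (cases "a = x \<or> b = x")
    case True
    then show ?thesis using ab by (auto simp: fz_entry_def)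
  next
    case False
    have "d a * (B a b + (\<bar>B a x\<bar> * B x b + B a x * \<bar>B x b\<bar>) div 2) =
          - (d b * (B b a + (\<bar>B b x\<bar> * B x a + B b x * \<bar>B x a\<bar>) div 2))"
    proof (rule skew_arith[OF _ _ _ _ _ ab])
      show "d x > 0" "d a > 0" "d b > 0" using d(1) x a b by blast+
      show "d a * B a x = - (d x * B x a)" "d x * B x b = - (d b * B b x)"
        using d(2) x a b by blast+
    qed
    then show ?thesis using False by (simp add: fz_entry_def)
  qed
qed

lemma mut_skew_symmetrizable:
  assumes sk: "skew_symmetrizable T" and x: "x \<in> exv T"
  shows "skew_symmetrizable (mut x T)"
proof -
  obtain d where d: "\<forall>v\<in>exv T. d v > 0"
      "\<forall>a\<in>exv T. \<forall>b\<in>exv T. d a * mat T a b = - (d b * mat T b a)"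
    using sk unfolding skew_symmetrizable_def by blast
  let ?p = "prev_var T x"
  show ?thesis unfolding skew_symmetrizable_def
  proof (intro exI[of _ "\<lambda>y. d (?p y)"] conjI ballI)
    fix y assume "y \<in> exv (mut x T)"
    then show "d (?p y) > 0" using d(1) prev_var_exv[OF x] by blast
  next
    fix y z assume "y \<in> exv (mut x T)" "z \<in> exv (mut x T)"
    then have "?p y \<in> exv T" "?p z \<in> exv T" using prev_var_exv[OF x] by blast+
    from fz_entry_skew[OF d x this]
    show "d (?p y) * mat (mut x T) y z = - (d (?p z) * mat (mut x T) z y)"
      by (simp only: mut_simps mut_mat_fz_entry)
  qed
qed

text \<open>Diagonal entries of a skew-symmetrizable matrix vanish, so x does not occur in its own
  exchange relation.\<close>
lemma skew_symmetrizable_diag: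
  assumes "skew_symmetrizable T" "x \<in> exv T"
  shows "mat T x x = 0"
proof -
  obtain d where "d x > 0" "d x * mat T x x = - (d x * mat T x x)"
    using assms unfolding skew_symmetrizable_def by blast
  then show ?thesis by simp
qed

lemma exchange_binomial:
  assumes g: "wf_seed T" and x: "x \<in> exv T"
  shows "\<exists>M1 M2. ks M1 = {y\<in>allv T. mat T y x > 0} \<and> ks M2 = {y\<in>allv T. mat T y x < 0} \<and>
           x * new_var T x = mono_eval M1 + mono_eval M2"
proof -
  have fin: "finite {y\<in>allv T. mat T y x \<noteq> 0}"
    using g x by (simp add: wf_seed_def column_finite_def)
  have f1: "finite {y\<in>allv T. mat T y x > 0}" by (rule finite_subset[OF _ fin]) auto
  have f2: "finite {y\<in>allv T. mat T y x < 0}" by (rule finite_subset[OF _ fin]) auto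
  obtain M1 where M1: "ks M1 = {y\<in>allv T. mat T y x > 0}"
     "mono_eval M1 = (\<Prod>y\<in>{y\<in>allv T. mat T y x > 0}. y ^ nat (mat T y x))"
    using product_as_monomial[OF f1, of "\<lambda>y. nat (mat T y x)"] by auto
  obtain M2 where M2: "ks M2 = {y\<in>allv T. mat T y x < 0}"
     "mono_eval M2 = (\<Prod>y\<in>{y\<in>allv T. mat T y x < 0}. y ^ nat (- mat T y x))"
    using product_as_monomial[OF f2, of "\<lambda>y. nat (- mat T y x)"] by auto
  have "x \<noteq> 0" using g x alg_indep_nonzero by (auto simp: wf_seed_def allv_def)
  then have "x * new_var T x = mono_eval M1 + mono_eval M2"
    by (simp add: new_var_def M1 M2)
  then show ?thesis using M1 M2 by blast
qed

lemma mut_alg_indep: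
  assumes g: "wf_seed T" and x: "x \<in> exv T"
  shows "new_var T x \<notin> allv T \<and> alg_indep (allv (mut x T))"
proof -
  define Y where "Y = allv T - {x}"
  have ins: "insert x Y = allv T" using x by (auto simp: Y_def allv_def)
  have ai: "alg_indep (insert x Y)" using g ins by (simp add: wf_seed_def)
  have "mat T x x = 0" using g x skew_symmetrizable_diag by (auto simp: wf_seed_def)
  then obtain M1 M2 where M: "ks M1 \<subseteq> Y" "ks M2 \<subseteq> Y"
      "x * new_var T x = mono_eval M1 + mono_eval M2"
    using exchange_binomial[OF g x] unfolding Y_def by fastforce
  have "allv (mut x T) = insert (new_var T x) Y"
    using g x by (auto simp: allv_def Y_def wf_seed_def)
  then show ?thesis
    using exchange_quotient_fresh[OF ai _ M] exchange_alg_indep[OF ai _ M] ins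
    by (simp add: Y_def)
qed

text \<open>Column-finiteness survives mutation: a mutated column is supported in the new variable
  and the union of two old columns.\<close>
lemma mut_column_finite:
  assumes cf: "column_finite T" and x: "x \<in> exv T"
  shows "column_finite (mut x T)"
  unfolding column_finite_def
proof
  fix z assume z: "z \<in> exv (mut x T)"
  let ?n = "new_var T x" and ?z0 = "prev_var T x z"
  have "{y\<in>allv (mut x T). mat (mut x T) y z \<noteq> 0} \<subseteq>
        insert ?n ({y\<in>allv T. mat T y ?z0 \<noteq> 0} \<union> {y\<in>allv T. mat T y x \<noteq> 0})"
  proof
    fix y assume y: "y \<in> {y\<in>allv (mut x T). mat (mut x T) y z \<noteq> 0}"
    show "y \<in> insert ?n ({y\<in>allv T. mat T y ?z0 \<noteq> 0} \<union> {y\<in>allv T. mat T y x \<noteq> 0})"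
    proof (cases "y = ?n")
      case False
      then have "prev_var T x y = y" by (simp add: prev_var_def)
      then show ?thesis using y prev_var_allv[OF x, of y] fz_entry_zero[of "mat T" y ?z0 x]
        by (auto simp: mut_mat_fz_entry)
    qed simp
  qed
  moreover have "?z0 \<in> exv T" using prev_var_exv[OF x z] .
  then have "finite ({y\<in>allv T. mat T y ?z0 \<noteq> 0} \<union> {y\<in>allv T. mat T y x \<noteq> 0})"
    using cf x by (simp add: column_finite_def)
  ultimately show "finite {y\<in>allv (mut x T). mat (mut x T) y z \<noteq> 0}"
    by (meson finite_insert finite_subset)
qed

lemma mut_wf_seed:
  assumes g: "wf_seed T" and x: "x \<in> exv T"
  shows "new_var T x \<notin> allv T \<and> wf_seed (mut x T)"
  using mut_alg_indep[OF g x] mut_column_finite[OF _ x] mut_skew_symmetrizable[OF _ x] g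
  by (auto simp: wf_seed_def allv_def)

section \<open>Full subseeds\<close>

text \<open>These are exactly the conditions under which mutations of T can be computed in T'.\<close>
definition full_subseed :: "'a::field seed \<Rightarrow> 'a seed \<Rightarrow> bool" where
  "full_subseed T T' \<longleftrightarrow> exv T \<subseteq> exv T' \<and> frv T \<subseteq> allv T' \<and> exv T \<inter> frv T = {} \<and>
     (\<forall>y\<in>allv T. \<forall>z\<in>exv T. mat T y z = mat T' y z) \<and>
     (\<forall>z\<in>exv T. \<forall>y\<in>allv T'. mat T' y z \<noteq> 0 \<longrightarrow> y \<in> allv T)"

lemma full_subseed_allv: "full_subseed T T' \<Longrightarrow> allv T \<subseteq> allv T'"
  by (auto simp: full_subseed_def allv_def)

lemma full_subseed_new_var:
  assumes R: "full_subseed T T'" and x: "x \<in> exv T"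
  shows "new_var T x = new_var T' x"
proof -
  have sub: "allv T \<subseteq> allv T'" using full_subseed_allv[OF R] .
  have eq: "\<forall>y\<in>allv T. mat T y x = mat T' y x"
    and nb: "\<forall>y\<in>allv T'. mat T' y x \<noteq> 0 \<longrightarrow> y \<in> allv T"
    using R x by (simp_all add: full_subseed_def)
  have s1: "{y\<in>allv T. mat T y x > 0} = {y\<in>allv T'. mat T' y x > 0}"
    and s2: "{y\<in>allv T. mat T y x < 0} = {y\<in>allv T'. mat T' y x < 0}"
    using sub eq nb by fastforce+
  have "(\<Prod>y\<in>{y\<in>allv T. mat T y x > 0}. y ^ nat (mat T y x)) =
        (\<Prod>y\<in>{y\<in>allv T'. mat T' y x > 0}. y ^ nat (mat T' y x))"
    unfolding s1[symmetric] by (rule prod.cong) (use eq in auto)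
  moreover have "(\<Prod>y\<in>{y\<in>allv T. mat T y x < 0}. y ^ nat (- mat T y x)) =
        (\<Prod>y\<in>{y\<in>allv T'. mat T' y x < 0}. y ^ nat (- mat T' y x))"
    unfolding s2[symmetric] by (rule prod.cong) (use eq in auto)
  ultimately show ?thesis unfolding new_var_def by simp
qed

text \<open>Mutating both seeds at an exchangeable variable of T preserves fullness.  Freshness of
  the new variable in T' (from well-formedness of T') keeps the two clusters compatible.\<close>
lemma full_subseed_mut:
  assumes R: "full_subseed T T'" and g: "wf_seed T'" and x: "x \<in> exv T"
  shows "full_subseed (mut x T) (mut x T')"
proof -
  let ?n = "new_var T x"
  have nv: "new_var T' x = ?n" using full_subseed_new_var[OF R x] by simp
  have x': "x \<in> exv T'" using R x by (auto simp: full_subseed_def)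
  have fresh: "?n \<notin> allv T'" using mut_wf_seed[OF g x'] nv by simp
  have sub: "allv T \<subseteq> allv T'" using full_subseed_allv[OF R] .
  have dj: "exv T \<inter> frv T = {}" "exv T' \<inter> frv T' = {}"
    using R g by (simp_all add: full_subseed_def wf_seed_def)
  have pv: "prev_var T' x = prev_var T x" by (simp add: fun_eq_iff prev_var_def nv)
  have same: "mat T a b = mat T' a b" if "a \<in> allv T" "b \<in> exv T" for a b
    using R that by (simp add: full_subseed_def)
  have outside: "mat T' a b = 0" if "b \<in> exv T" "a \<in> allv T'" "a \<notin> allv T" for a b
    using R that by (auto simp: full_subseed_def)
  have entries: "mat (mut x T) y z = mat (mut x T') y z"
    if y: "y \<in> allv (mut x T)" and z: "z \<in> exv (mut x T)" for y z
  proof -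
    have "prev_var T x y \<in> allv T" "prev_var T x z \<in> exv T"
      using prev_var_allv[OF x y] prev_var_exv[OF x z] .
    moreover have "x \<in> allv T" using x by (simp add: allv_def)
    ultimately show ?thesis
      by (simp add: mut_mat_fz_entry pv) (intro fz_entry_cong same x)
  qed
  have neighbours: "y \<in> allv (mut x T)"
    if z: "z \<in> exv (mut x T)" and y: "y \<in> allv (mut x T')" and ne: "mat (mut x T') y z \<noteq> 0"
    for y z
  proof (rule ccontr)
    assume yn: "y \<notin> allv (mut x T)"
    then have "y \<noteq> ?n" by (simp add: allv_def)
    then have yT': "y \<in> allv T'" "y \<noteq> x" and py: "prev_var T x y = y"
      using y nv x' dj(2) by (auto simp: allv_def prev_var_def)
    have "y \<notin> allv T" using yn yT'(2) by (auto simp: allv_def)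
    moreover have "prev_var T x z \<in> exv T" using prev_var_exv[OF x z] .
    ultimately have "mat T' y (prev_var T x z) = 0" "mat T' y x = 0"
      using outside x yT'(1) by blast+
    then have "mat (mut x T') y z = 0"
      by (simp add: mut_mat_fz_entry pv py fz_entry_zero)
    then show False using ne by simp
  qed
  have "exv (mut x T) \<subseteq> exv (mut x T')" "frv (mut x T) \<subseteq> allv (mut x T')"
    "exv (mut x T) \<inter> frv (mut x T) = {}"
    using R dj fresh sub nv x by (auto simp: full_subseed_def allv_def)
  then show ?thesis using entries neighbours by (simp add: full_subseed_def)
qed

lemma full_subseed_mutseq:
  "full_subseed T T' \<Longrightarrow> wf_seed T' \<Longrightarrow> admissible xs T \<Longrightarrow>
    admissible xs T' \<and> full_subseed (mutseq xs T) (mutseq xs T') \<and>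
    (\<forall>y\<in>allv T. track xs T y = track xs T' y)"
proof (induction xs arbitrary: T T')
  case Nil
  then show ?case by simp
next
  case (Cons x xs)
  have x: "x \<in> exv T" and ad: "admissible xs (mut x T)" using Cons.prems by auto
  have x': "x \<in> exv T'" using Cons.prems(1) x by (auto simp: full_subseed_def)
  have IH: "admissible xs (mut x T') \<and> full_subseed (mutseq xs (mut x T)) (mutseq xs (mut x T')) \<and>
      (\<forall>y\<in>allv (mut x T). track xs (mut x T) y = track xs (mut x T') y)"
    using Cons.IH[OF full_subseed_mut[OF Cons.prems(1,2) x] _ ad] mut_wf_seed[OF Cons.prems(2) x']
    by blast
  have nv: "new_var T' x = new_var T x" using full_subseed_new_var[OF Cons.prems(1) x] by simp
  have "(if y = x then new_var T x else y) \<in> allv (mut x T)" if "y \<in> allv T" for y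
    using that by (auto simp: allv_def)
  then show ?case using IH x' nv by simp
qed

lemma full_subseed_clalg:
  assumes R: "full_subseed T T'" and g: "wf_seed T'"
  shows "clalg T \<subseteq> clalg T'"
proof -
  have cv: "cluster_vars T \<subseteq> cluster_vars T'"
  proof
    fix v assume "v \<in> cluster_vars T"
    then obtain xs where xs: "admissible xs T" "v \<in> allv (mutseq xs T)"
      by (auto simp: cluster_vars_def)
    have "admissible xs T'" "full_subseed (mutseq xs T) (mutseq xs T')"
      using full_subseed_mutseq[OF R g xs(1)] by auto
    then show "v \<in> cluster_vars T'" using xs(2) full_subseed_allv
      by (fastforce simp: cluster_vars_def)
  qed
  show ?thesis
  proof
    fix a assume "a \<in> clalg T"
    then show "a \<in> clalg T'"
      by induction (use cv in \<open>auto intro: clalg.intros\<close>)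
  qed
qed

lemma full_subseed_inclusion:
  assumes R: "full_subseed T T'" and g: "wf_seed T'"
  shows "rooted_cluster_morphism T T' id"
  unfolding rooted_cluster_morphism_def
proof (intro conjI allI impI ballI)
  show "ring_hom_on (clalg T) (clalg T') id"
    using full_subseed_clalg[OF R g] by (simp add: ring_hom_on_def)
  show "id x \<in> exv T' \<union> \<int>" if "x \<in> exv T" for x using R that by (auto simp: full_subseed_def)
  show "id x \<in> allv T' \<union> \<int>" if "x \<in> frv T" for x using R that by (auto simp: full_subseed_def)
next
  fix xs y assume ad: "admissible xs T" and y: "y \<in> allv T"
  have "y \<notin> \<int>"
    using alg_indep_not_int[of "allv T'" y] g y full_subseed_allv[OF R] by (auto simp: wf_seed_def)
  then show "id (track xs T y) = (if id y \<in> \<int> then id y else track (map id xs) T' (id y))"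
    using full_subseed_mutseq[OF R g ad] y by simp
qed

section \<open>Rooted cluster morphisms and the neighbour lemma\<close>

lemma clalg_power: "a \<in> clalg S \<Longrightarrow> a ^ k \<in> clalg S"
  by (induction k) (auto intro: clalg.intros)

lemma ring_hom_on_power:
  assumes h: "ring_hom_on (clalg S) A f" and a: "a \<in> clalg S"
  shows "f (a ^ k) = f a ^ k"
proof (induction k)
  case 0 then show ?case using h by (simp add: ring_hom_on_def)
next
  case (Suc k)
  have "f (a * a ^ k) = f a * f (a ^ k)"
    using h a clalg_power[OF a] by (simp add: ring_hom_on_def)
  then show ?case using Suc by simp
qed

lemma ring_hom_on_prod_powers:
  assumes h: "ring_hom_on (clalg S) A f" and F: "finite F" "F \<subseteq> clalg S"
  shows "(\<Prod>y\<in>F. y ^ e y) \<in> clalg S \<and> f (\<Prod>y\<in>F. y ^ e y) = (\<Prod>y\<in>F. f y ^ e y)"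
  using F
proof (induction F rule: finite_induct)
  case empty then show ?case using h by (simp add: ring_hom_on_def clalg.one)
next
  case (insert a F)
  then have a: "a \<in> clalg S" and IH: "(\<Prod>y\<in>F. y ^ e y) \<in> clalg S"
      "f (\<Prod>y\<in>F. y ^ e y) = (\<Prod>y\<in>F. f y ^ e y)"
    by auto
  have ak: "a ^ e a \<in> clalg S" by (rule clalg_power[OF a])
  have "f (a ^ e a * (\<Prod>y\<in>F. y ^ e y)) = f (a ^ e a) * f (\<Prod>y\<in>F. y ^ e y)"
    using h ak IH(1) by (simp add: ring_hom_on_def)
  then show ?case using insert ak IH ring_hom_on_power[OF h a] by (simp add: clalg.mult)
qed

lemma allv_clalg: "y \<in> allv S \<Longrightarrow> y \<in> clalg S"
  unfolding cluster_vars_def by (rule clalg.gen) (auto simp: cluster_vars_def intro!: exI[of _ "[]"])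

lemma new_var_clalg: "x \<in> exv S \<Longrightarrow> new_var S x \<in> clalg S"
  by (rule clalg.gen) (auto simp: cluster_vars_def allv_def intro!: exI[of _ "[x]"])

text \<open>(CM3) for the one-step sequence [x0]: f maps the exchanged variable of x0 to the
  exchanged variable of f(x0), whenever f(x0) is exchangeable.\<close>
lemma morphism_new_var:
  assumes gS': "wf_seed S'" and rcm: "rooted_cluster_morphism S S' f"
    and x0: "x0 \<in> exv S" and fx0: "f x0 \<in> exv S'"
  shows "f (new_var S x0) = new_var S' (f x0)"
proof -
  have "\<forall>xs y. admissible xs S \<longrightarrow> admissible (map f xs) S' \<longrightarrow> y \<in> allv S \<longrightarrow>
      f (track xs S y) = (if f y \<in> \<int> then f y else track (map f xs) S' (f y))"
    using rcm by (simp add: rooted_cluster_morphism_def)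
  moreover have "admissible [x0] S" "admissible (map f [x0]) S'" "x0 \<in> allv S"
    using x0 fx0 by (simp_all add: allv_def)
  ultimately have "f (track [x0] S x0) = (if f x0 \<in> \<int> then f x0 else track (map f [x0]) S' (f x0))"
    by blast
  moreover have "f x0 \<notin> \<int>" using alg_indep_not_int gS' fx0 by (auto simp: wf_seed_def allv_def)
  ultimately show ?thesis by simp
qed

lemma morphism_exchange_relation:
  assumes gS: "wf_seed S" and gS': "wf_seed S'" and rcm: "rooted_cluster_morphism S S' f"
    and x0: "x0 \<in> exv S" and fx0: "f x0 \<in> exv S'"
  shows "\<exists>c1 m1 c2 m2. ks m1 \<union> ks m2 \<subseteq> allv S' \<inter> f ` allv S \<and>
           f x0 * new_var S' (f x0) = of_int c1 * mono_eval m1 + of_int c2 * mono_eval m2"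
proof -
  have hom: "ring_hom_on (clalg S) (clalg S') f"
    and vars: "\<forall>y\<in>allv S. f y \<in> allv S' \<union> \<int>"
    using rcm by (auto simp: rooted_cluster_morphism_def allv_def)
  let ?n0 = "new_var S x0"
  define A1 where "A1 = {y\<in>allv S. mat S y x0 > 0}"
  define A2 where "A2 = {y\<in>allv S. mat S y x0 < 0}"
  define e1 where "e1 y = nat (mat S y x0)" for y
  define e2 where "e2 y = nat (- mat S y x0)" for y
  have fin: "finite {y\<in>allv S. mat S y x0 \<noteq> 0}"
    using gS x0 by (simp add: wf_seed_def column_finite_def)
  have f1: "finite A1" unfolding A1_def by (rule finite_subset[OF _ fin]) auto
  have f2: "finite A2" unfolding A2_def by (rule finite_subset[OF _ fin]) auto
  have Acl: "A1 \<subseteq> clalg S" "A2 \<subseteq> clalg S" by (auto simp: A1_def A2_def intro: allv_clalg)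
  have x0a: "x0 \<in> allv S" using x0 by (simp add: allv_def)
  have "x0 \<noteq> 0" using gS x0a alg_indep_nonzero by (auto simp: wf_seed_def)
  then have exch: "x0 * ?n0 = (\<Prod>y\<in>A1. y ^ e1 y) + (\<Prod>y\<in>A2. y ^ e2 y)"
    by (simp add: new_var_def A1_def A2_def e1_def e2_def)
  have fn0: "f ?n0 = new_var S' (f x0)" by (rule morphism_new_var[OF gS' rcm x0 fx0])
  have P1: "(\<Prod>y\<in>A1. y ^ e1 y) \<in> clalg S" "f (\<Prod>y\<in>A1. y ^ e1 y) = (\<Prod>y\<in>A1. f y ^ e1 y)"
    and P2: "(\<Prod>y\<in>A2. y ^ e2 y) \<in> clalg S" "f (\<Prod>y\<in>A2. y ^ e2 y) = (\<Prod>y\<in>A2. f y ^ e2 y)"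
    using ring_hom_on_prod_powers[OF hom f1 Acl(1)] ring_hom_on_prod_powers[OF hom f2 Acl(2)]
    by auto
  have "f x0 * f ?n0 = f (x0 * ?n0)"
    using hom allv_clalg[OF x0a] new_var_clalg[OF x0] by (simp add: ring_hom_on_def)
  also have "\<dots> = (\<Prod>y\<in>A1. f y ^ e1 y) + (\<Prod>y\<in>A2. f y ^ e2 y)"
    using hom P1 P2 by (simp add: exch ring_hom_on_def)
  finally have image_exch: "f x0 * new_var S' (f x0) = (\<Prod>y\<in>A1. f y ^ e1 y) + (\<Prod>y\<in>A2. f y ^ e2 y)"
    by (simp add: fn0)
  obtain c1 m1 where m1: "ks m1 \<subseteq> allv S' \<inter> f ` A1" "(\<Prod>y\<in>A1. f y ^ e1 y) = of_int c1 * mono_eval m1"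
    using product_of_images_as_monomial[OF f1, of f "allv S'" e1] vars by (auto simp: A1_def)
  obtain c2 m2 where m2: "ks m2 \<subseteq> allv S' \<inter> f ` A2" "(\<Prod>y\<in>A2. f y ^ e2 y) = of_int c2 * mono_eval m2"
    using product_of_images_as_monomial[OF f2, of f "allv S'" e2] vars by (auto simp: A2_def)
  have "ks m1 \<union> ks m2 \<subseteq> allv S' \<inter> f ` allv S" using m1(1) m2(1) by (auto simp: A1_def A2_def)
  moreover have "f x0 * new_var S' (f x0) = of_int c1 * mono_eval m1 + of_int c2 * mono_eval m2"
    using image_exch m1(2) m2(2) by simp
  ultimately show ?thesis by blast
qed

text \<open>Compare the exchange relation of f(x0) in S'
  with the image of the exchange relation of x0, using independence of the cluster of S'.\<close>
lemma morphism_neighbours: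
  assumes gS: "wf_seed S" and gS': "wf_seed S'" and rcm: "rooted_cluster_morphism S S' f"
    and x0: "x0 \<in> exv S" and fx0: "f x0 \<in> exv S'"
    and y: "y \<in> allv S'" and ne: "mat S' y (f x0) \<noteq> 0"
  shows "y \<in> f ` allv S"
proof -
  obtain N1 N2 where N: "ks N1 = {y\<in>allv S'. mat S' y (f x0) > 0}"
      "ks N2 = {y\<in>allv S'. mat S' y (f x0) < 0}"
      "f x0 * new_var S' (f x0) = mono_eval N1 + mono_eval N2"
    using exchange_binomial[OF gS' fx0] by blast
  obtain c1 m1 c2 m2 where m: "ks m1 \<union> ks m2 \<subseteq> allv S' \<inter> f ` allv S"
      "f x0 * new_var S' (f x0) = of_int c1 * mono_eval m1 + of_int c2 * mono_eval m2"
    using morphism_exchange_relation[OF gS gS' rcm x0 fx0] by blast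
  have "alg_indep (allv S')" using gS' by (simp add: wf_seed_def)
  moreover have "ks N1 \<subseteq> allv S'" "ks N2 \<subseteq> allv S'" "ks m1 \<subseteq> allv S'" "ks m2 \<subseteq> allv S'"
    "ks N1 \<inter> ks N2 = {}" using N m(1) by auto
  moreover have "mono_eval N1 + mono_eval N2 = of_int c1 * mono_eval m1 + of_int c2 * mono_eval m2"
    using N(3) m(2) by simp
  moreover have "y \<in> ks N1 \<union> ks N2" using N y ne by auto
  ultimately have "y \<in> ks m1 \<union> ks m2" by (rule binomial_support)
  then show ?thesis using m(1) by blast
qed

section \<open>The image seed\<close>

lemma image_seed_vars [simp]:
  "exv (image_seed S S' f) = exv S' \<inter> f ` exv S"
  "allv (image_seed S S' f) = allv S' \<inter> f ` allv S"
  by (auto simp: image_seed_def Let_def allv_def)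

lemma image_seed_mat:
  "mat (image_seed S S' f) y z =
     (if y \<in> allv S' \<inter> f ` allv S \<and> z \<in> exv S' \<inter> f ` exv S then mat S' y z else 0)"
  by (simp add: image_seed_def Let_def)

lemma image_seed_is_seed:
  assumes S': "is_seed S'"
  shows "is_seed (image_seed S S' f)"
proof -
  let ?I = "image_seed S S' f"
  have sub: "exv ?I \<subseteq> exv S'" "allv ?I \<subseteq> allv S'" by auto
  note mat = image_seed_mat[of S S' f]
  have "countable (exv ?I)" "countable (frv ?I)"
    using S' sub by (auto simp: is_seed_def allv_def intro: countable_subset)
  moreover have "alg_indep (allv ?I)"
    using S' sub(2) by (meson alg_indep_mono is_seed_def)
  moreover have "locally_finite ?I"
    unfolding locally_finite_def
  proof (intro conjI ballI)
    fix z assume "z \<in> exv ?I"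
    then have "finite {y\<in>allv S'. mat S' y z \<noteq> 0}"
      using S' sub(1) by (auto simp: is_seed_def locally_finite_def simp del: image_seed_vars)
    then show "finite {y\<in>allv ?I. mat ?I y z \<noteq> 0}"
      by (rule finite_subset[rotated]) (auto simp: mat)
  next
    fix y assume "y \<in> allv ?I"
    then have "finite {z\<in>exv S'. mat S' y z \<noteq> 0}"
      using S' sub(2) by (auto simp: is_seed_def locally_finite_def simp del: image_seed_vars)
    then show "finite {z\<in>exv ?I. mat ?I y z \<noteq> 0}"
      by (rule finite_subset[rotated]) (auto simp: mat)
  qed
  moreover have "skew_symmetrizable ?I"
  proof -
    obtain d where d: "\<forall>v\<in>exv S'. d v > 0"
        "\<forall>a\<in>exv S'. \<forall>b\<in>exv S'. d a * mat S' a b = - (d b * mat S' b a)"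
      using S' unfolding is_seed_def skew_symmetrizable_def by blast
    show ?thesis unfolding skew_symmetrizable_def
    proof (intro exI[of _ d] conjI ballI)
      fix v assume "v \<in> exv ?I"
      then show "d v > 0" using d(1) sub(1) by blast
    next
      fix a b assume ab: "a \<in> exv ?I" "b \<in> exv ?I"
      then have "d a * mat S' a b = - (d b * mat S' b a)" using d(2) sub(1) by blast
      moreover have "mat ?I a b = mat S' a b" "mat ?I b a = mat S' b a"
        using ab by (auto simp: mat allv_def)
      ultimately show "d a * mat ?I a b = - (d b * mat ?I b a)" by simp
    qed
  qed
  moreover have "exv ?I \<inter> frv ?I = {}" by (simp add: image_seed_def Let_def)
  ultimately show ?thesis by (simp add: is_seed_def)
qed

text \<open>The image seed is a full subseed of S'; fullness is the neighbour lemma.\<close>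
lemma image_seed_full_subseed:
  assumes gS: "wf_seed S" and gS': "wf_seed S'" and rcm: "rooted_cluster_morphism S S' f"
  shows "full_subseed (image_seed S S' f) S'"
  unfolding full_subseed_def
proof (intro conjI ballI impI)
  let ?I = "image_seed S S' f"
  show "exv ?I \<subseteq> exv S'" "frv ?I \<subseteq> allv S'" "exv ?I \<inter> frv ?I = {}"
    by (auto simp: image_seed_def Let_def allv_def)
  show "mat ?I y z = mat S' y z" if "y \<in> allv ?I" "z \<in> exv ?I" for y z
    using that by (simp add: image_seed_mat)
  show "y \<in> allv ?I" if z: "z \<in> exv ?I" and y: "y \<in> allv S'" and ne: "mat S' y z \<noteq> 0" for z y
  proof -
    obtain x0 where x0: "x0 \<in> exv S" "z = f x0" "f x0 \<in> exv S'" using z by auto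
    then have "y \<in> f ` allv S" using morphism_neighbours[OF gS gS' rcm x0(1,3) y] ne by simp
    then show ?thesis using y by simp
  qed
qed

lemma rooted_cluster_morphism_corestrict:
  assumes rcm: "rooted_cluster_morphism S S' f"
    and R: "full_subseed T S'" and g: "wf_seed S'"
    and ex: "exv S' \<inter> f ` exv S \<subseteq> exv T" and all: "allv S' \<inter> f ` allv S \<subseteq> allv T"
    and alg: "f ` clalg S \<subseteq> clalg T"
  shows "rooted_cluster_morphism S T f"
  unfolding rooted_cluster_morphism_def
proof (intro conjI allI impI ballI)
  show "ring_hom_on (clalg S) (clalg T) f"
    using rcm alg by (simp add: rooted_cluster_morphism_def ring_hom_on_def)
  show "f x \<in> exv T \<union> \<int>" if "x \<in> exv S" for x
    using rcm that ex by (auto simp: rooted_cluster_morphism_def)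
  show "f x \<in> allv T \<union> \<int>" if "x \<in> frv S" for x
    using rcm that all by (auto simp: rooted_cluster_morphism_def allv_def)
next
  fix xs y assume ad: "admissible xs S" and adT: "admissible (map f xs) T" and y: "y \<in> allv S"
  have tr: "admissible (map f xs) S'" "\<forall>v\<in>allv T. track (map f xs) T v = track (map f xs) S' v"
    using full_subseed_mutseq[OF R g adT] by auto
  have "f (track xs S y) = (if f y \<in> \<int> then f y else track (map f xs) S' (f y))"
    using rcm ad tr(1) y by (simp add: rooted_cluster_morphism_def)
  moreover have "f y \<in> allv T" if "f y \<notin> \<int>"
    using rcm y that all by (auto simp: rooted_cluster_morphism_def allv_def)
  ultimately show "f (track xs S y) = (if f y \<in> \<int> then f y else track (map f xs) T (f y))"
    using tr(2) by auto
qed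

theorem mainTheorem5:
  fixes S :: "'a::field_char_0 seed" and S' :: "'b::field_char_0 seed" and f :: "'a \<Rightarrow> 'b"
  assumes "is_seed S" and "is_seed S'"
    and "rooted_cluster_morphism S S' f"
  shows "is_seed (image_seed S S' f) \<and>
         rooted_cluster_morphism (image_seed S S' f) S' id \<and>
         inj_on id (clalg (image_seed S S' f)) \<and>
         (ideal_morphism S S' f \<longrightarrow>
         (\<exists>g. rooted_cluster_morphism S (image_seed S S' f) g \<and>
             g ` clalg S = clalg (image_seed S S' f) \<and>
             (\<forall>a\<in>clalg S. f a = id (g a))))"
proof -
  let ?I = "image_seed S S' f"
  have wf: "wf_seed S'" using is_seed_wf[OF assms(2)] .
  have full: "full_subseed ?I S'"
    using image_seed_full_subseed[OF is_seed_wf[OF assms(1)] wf assms(3)] .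
  have part2: "\<exists>g. rooted_cluster_morphism S ?I g \<and> g ` clalg S = clalg ?I \<and> (\<forall>a\<in>clalg S. f a = id (g a))"
    if "ideal_morphism S S' f"
  proof -
    have onto: "clalg ?I = f ` clalg S" using that by (simp add: ideal_morphism_def)
    have "rooted_cluster_morphism S ?I f"
      by (rule rooted_cluster_morphism_corestrict[OF assms(3) full wf])
        (simp_all add: onto)
    then show ?thesis using onto by auto
  qed
  show ?thesis
    using image_seed_is_seed[OF assms(2)] full_subseed_inclusion[OF full wf] part2 by simp
qed

end
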